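(* Let $d\ge2$, $n=2$, and $\mathcal T=\sum_{k=1}^3\mathbf v_k^{\otimes d}$. (i) If $d\in\{2,4\}$, every $\mathbf v\in\mathbb R^2$ with $\|\mathbf v\|=1$ is an eigenvector of $\mathcal T$, with eigenvalue $\mu=\frac32$ if $d=2$ and $\mu=\frac98$ if $d=4$. (ii) If $d\ge6$ is even, the normalized eigenpairs of $\mathcal T$ are exactly the $12$ pairs $(\pm\mathbf v_k,\,1+2^{1-d})$, $1\le k\le3$, and $\big((\mathbf v_k+2\mathbf v_j)/\sqrt3,\,3^{d/2}2^{1-d}\big)$, $1\le k\ne j\le3$. (iii) If $d\ge3$ is odd, the normalized eigenpairs of $\mathcal T$ are exactly the $6$ pairs $(\mathbf v_k,\,1-2^{1-d})$ and $(-\mathbf v_k,\,-(1-2^{1-d}))$, $1\le k\le3$.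
   Context: For $n=2$ the simplex frame is $\mathbf v_1=(1,0)^\top$, $\mathbf v_2=(-\frac12,\frac{\sqrt3}2)^\top$, $\mathbf v_3=(-\frac12,-\frac{\sqrt3}2)^\top$ (unit vectors with pairwise inner product $-\frac12$ and sum $\mathbf 0$; up to an orthogonal transformation this is the general definition $\mathbf v_k=\sqrt{1+\frac1n}\mathbf e_k-n^{-3/2}(\sqrt{n+1}-1)\mathbf 1_n$, $\mathbf v_{n+1}=-n^{-1/2}\mathbf 1_n$). $\mathcal T\cdot\mathbf v^{d-1}=\sum_{k=1}^3\langle\mathbf v,\mathbf v_k\rangle^{d-1}\mathbf v_k$. A normalized eigenpair is $(\mathbf v,\mu)$ with $\|\mathbf v\|=1$ and $\mathcal T\cdot\mathbf v^{d-1}=\mu\mathbf v$. *)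

theory Defs
  imports "HOL-Analysis.Analysis"
begin

definition sv :: "nat \<Rightarrow> real^2" where
  "sv k = (if k = 1 then vector [1, 0]
           else if k = 2 then vector [-1/2, sqrt 3 / 2]
           else vector [-1/2, - sqrt 3 / 2])"

text \<open>The tensor T = sum_k v_k^{\<otimes> d} applied to v^{d-1}.\<close>
definition Tapply :: "nat \<Rightarrow> real^2 \<Rightarrow> real^2" where
  "Tapply d v = (\<Sum>k\<in>{1..3}. (v \<bullet> sv k) ^ (d - 1) *\<^sub>R sv k)"

definition is_eigenpair :: "nat \<Rightarrow> real^2 \<Rightarrow> real \<Rightarrow> bool" where
  "is_eigenpair d v \<mu> \<longleftrightarrow> Tapply d v = \<mu> *\<^sub>R v"

definition normalized_eigenpairs :: "nat \<Rightarrow> ((real^2) \<times> real) set" where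
  "normalized_eigenpairs d = {(v, \<mu>). norm v = 1 \<and> is_eigenpair d v \<mu>}"

end

theory Submission
  imports Defs
begin

text \<open>For a unit vector \<open>v\<close> put \<open>a, b, c = \<langle>v, v\<^sub>k\<rangle>\<close>. Then \<open>a + b + c = 0\<close> and, the frame being
  tight, \<open>ab + bc + ca = -3/4\<close>, so \<open>a, b, c\<close> are the roots of \<open>t\<^sup>3 = 3/4 t + abc\<close>. The equation
  \<open>T v\<^sup>d\<^sup>-\<^sup>1 = \<mu> v\<close> says \<open>\<mu> = a\<^sup>d + b\<^sup>d + c\<^sup>d\<close> and that the component of \<open>T v\<^sup>d\<^sup>-\<^sup>1\<close> orthogonal
  to \<open>v\<close> vanishes; up to the factor \<open>\<surd>3\<close> that component is the alternating sum
  \<open>a\<^sup>d\<^sup>-\<^sup>1(c - b) + b\<^sup>d\<^sup>-\<^sup>1(a - c) + c\<^sup>d\<^sup>-\<^sup>1(b - a) = (a - b)(b - c)(c - a) h\<^sub>d\<^sub>-\<^sub>3(a, b, c)\<close>.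
  The complete homogeneous polynomials satisfy \<open>h\<^sub>n = 3/4 h\<^sub>n\<^sub>-\<^sub>2 + abc h\<^sub>n\<^sub>-\<^sub>3\<close> with \<open>h\<^sub>1 = 0\<close>, so
  every unit vector is an eigenvector for \<open>d = 2, 4\<close>, while otherwise \<open>h\<^sub>d\<^sub>-\<^sub>3\<close> vanishes only if
  \<open>abc = 0\<close> and \<open>d\<close> is even. Finally \<open>a, b, c\<close> are not distinct exactly at \<open>\<plusminus>v\<^sub>k\<close>, and
  \<open>abc = 0\<close> exactly at the unit normals \<open>(v\<^sub>k + 2v\<^sub>j)/\<surd>3\<close> of the frame vectors.\<close>

definition vec2 :: "real \<Rightarrow> real \<Rightarrow> real^2" where "vec2 x y = vector [x, y]"

lemma vec2_nth [simp]: "vec2 x y $ 1 = x" "vec2 x y $ 2 = y"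
  by (simp_all add: vec2_def)

lemma vec2_cases: obtains x y where "v = vec2 x y"
  using that[of "v $ 1" "v $ 2"] by (simp add: vec_eq_iff forall_2)

lemma vec2_eq_iff [simp]: "vec2 a b = vec2 c d \<longleftrightarrow> a = c \<and> b = d"
  by (auto simp: vec_eq_iff forall_2)

lemma inner_vec2 [simp]: "vec2 a b \<bullet> vec2 c d = a * c + b * d"
  by (simp add: inner_vec_def sum_2)

lemma scaleR_vec2 [simp]: "r *\<^sub>R vec2 a b = vec2 (r * a) (r * b)"
  and add_vec2 [simp]: "vec2 a b + vec2 c d = vec2 (a + c) (b + d)"
  and diff_vec2 [simp]: "vec2 a b - vec2 c d = vec2 (a - c) (b - d)"
  and uminus_vec2 [simp]: "- vec2 a b = vec2 (- a) (- b)"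
  and zero_vec2: "0 = vec2 0 0"
  by (simp_all add: vec_eq_iff forall_2)

lemma norm_vec2_power2: "(norm (vec2 a b))\<^sup>2 = a\<^sup>2 + b\<^sup>2"
  unfolding power2_norm_eq_inner by (simp add: power2_eq_square)

lemma sqrt_3_neq:
  "sqrt 3 \<noteq> (0::real)" "sqrt 3 \<noteq> (1::real)" "sqrt 3 \<noteq> (-1::real)" "sqrt 3 \<noteq> (2::real)" "sqrt 3 \<noteq> (-2::real)"
proof -
  have "sqrt 3 > (0::real)" "sqrt 3 \<noteq> (1::real)" by simp_all
  moreover have "sqrt 3 \<noteq> (2::real)"
  proof
    assume "sqrt 3 = (2::real)"
    then have "(sqrt 3)\<^sup>2 = (2::real)\<^sup>2" by simp
    then show False by simp
  qed
  ultimately show "sqrt 3 \<noteq> (0::real)" "sqrt 3 \<noteq> (1::real)" "sqrt 3 \<noteq> (-1::real)" "sqrt 3 \<noteq> (2::real)" "sqrt 3 \<noteq> (-2::real)"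
    by linarith+
qed

definition rot90 :: "real^2 \<Rightarrow> real^2" where "rot90 v = vec2 (- v $ 2) (v $ 1)"

lemma rot90_vec2 [simp]: "rot90 (vec2 x y) = vec2 (- y) x"
  by (simp add: rot90_def)

lemma rot90_rot90 [simp]: "rot90 (rot90 v) = - v"
  by (cases v rule: vec2_cases) simp

lemma norm_rot90 [simp]: "norm (rot90 v) = norm v"
  by (cases v rule: vec2_cases) (simp add: norm_eq_sqrt_inner algebra_simps)

lemma eq_scaleR_unit_iff:
  assumes "norm v = 1"
  shows "w = \<mu> *\<^sub>R v \<longleftrightarrow> \<mu> = v \<bullet> w \<and> rot90 v \<bullet> w = 0"
proof -
  obtain x y where v: "v = vec2 x y" by (rule vec2_cases)
  obtain p q where w: "w = vec2 p q" by (rule vec2_cases)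
  have n: "x\<^sup>2 + y\<^sup>2 = 1" using assms norm_vec2_power2[of x y] by (simp add: v)
  show ?thesis unfolding v w using n
    by (auto simp: algebra_simps power2_eq_square) algebra+
qed

lemma unit_inner_rot90_eq_0_iff:
  assumes "norm u = 1" "norm v = 1"
  shows "v \<bullet> rot90 u = 0 \<longleftrightarrow> v = u \<or> v = - u"
proof
  obtain p q where u: "u = vec2 p q" by (rule vec2_cases)
  obtain x y where v: "v = vec2 x y" by (rule vec2_cases)
  have nu: "p\<^sup>2 + q\<^sup>2 = 1" and nv: "x\<^sup>2 + y\<^sup>2 = 1"
    using assms norm_vec2_power2[of p q] norm_vec2_power2[of x y] by (simp_all add: u v)
  assume "v \<bullet> rot90 u = 0"
  then have par: "y * p = x * q" by (simp add: u v)
  define t where "t = x * p + y * q"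
  have xy: "x = t * p" "y = t * q"
    using nu par unfolding t_def by algebra+
  then have "t\<^sup>2 = 1" using nu nv by algebra
  then have "t = 1 \<or> t = -1" by (simp add: power2_eq_1_iff)
  then show "v = u \<or> v = - u" using xy by (auto simp: u v)
qed (auto simp: rot90_def inner_vec_def sum_2)

lemma unit_inner_eq_0_iff:
  assumes "norm u = 1" "norm v = 1"
  shows "v \<bullet> u = 0 \<longleftrightarrow> v = rot90 u \<or> v = - rot90 u"
  using unit_inner_rot90_eq_0_iff[of "rot90 u" v] assms by simp

text \<open>If \<open>a, b, c\<close> are the roots of \<open>t\<^sup>3 = p t + q\<close>, then \<open>complete_hom p q (n + 2)\<close> is the
  complete homogeneous symmetric polynomial of degree \<open>n\<close> in \<open>a, b, c\<close>.\<close>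
fun complete_hom :: "real \<Rightarrow> real \<Rightarrow> nat \<Rightarrow> real" where
  "complete_hom p q 0 = 0"
| "complete_hom p q (Suc 0) = 0"
| "complete_hom p q (Suc (Suc 0)) = 1"
| "complete_hom p q (Suc (Suc (Suc n))) = p * complete_hom p q (Suc n) + q * complete_hom p q n"

lemma cubic_root_power_Suc3:
  fixes t :: real
  assumes "t ^ 3 = p * t + q"
  shows "t ^ Suc (Suc (Suc n)) = p * t ^ Suc n + q * t ^ n"
proof -
  have "t ^ Suc (Suc (Suc n)) = t ^ 3 * t ^ n" by (simp add: power3_eq_cube)
  also have "\<dots> = p * t ^ Suc n + q * t ^ n" unfolding assms by (simp add: algebra_simps)
  finally show ?thesis .
qed

lemma alternating_power_sum_eq:
  fixes a b c :: real
  assumes "a ^ 3 = p * a + q" "b ^ 3 = p * b + q" "c ^ 3 = p * c + q"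
  shows "a ^ n * (c - b) + b ^ n * (a - c) + c ^ n * (b - a)
    = (a - b) * (b - c) * (c - a) * complete_hom p q n"
  using assms
proof (induction p q n rule: complete_hom.induct)
  case (4 p q n)
  note roots = "4.prems"
  have "a ^ Suc (Suc (Suc n)) * (c - b) + b ^ Suc (Suc (Suc n)) * (a - c) + c ^ Suc (Suc (Suc n)) * (b - a)
      = p * (a ^ Suc n * (c - b) + b ^ Suc n * (a - c) + c ^ Suc n * (b - a))
        + q * (a ^ n * (c - b) + b ^ n * (a - c) + c ^ n * (b - a))"
    unfolding cubic_root_power_Suc3[OF roots(1)] cubic_root_power_Suc3[OF roots(2)]
      cubic_root_power_Suc3[OF roots(3)]
    by (simp add: algebra_simps)
  also have "\<dots> = (a - b) * (b - c) * (c - a) * complete_hom p q (Suc (Suc (Suc n)))"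
    unfolding "4.IH"(1)[OF roots] "4.IH"(2)[OF roots] by (simp add: algebra_simps)
  finally show ?case .
qed (simp_all add: algebra_simps power2_eq_square)

lemma complete_hom_pos:
  "p > 0 \<Longrightarrow> q > 0 \<Longrightarrow> complete_hom p q n \<ge> 0 \<and> (n \<ge> 2 \<and> n \<noteq> 3 \<longrightarrow> complete_hom p q n > 0)"
proof (induction p q n rule: complete_hom.induct)
  case (4 p q n)
  have n0: "complete_hom p q n \<ge> 0" and n1: "complete_hom p q (Suc n) \<ge> 0" using 4 by auto
  have "complete_hom p q (Suc (Suc (Suc n))) > 0" if "n \<ge> 1"
  proof (cases "n = 2")
    case True
    then show ?thesis using "4.prems" n1 by (simp add: numeral_eq_Suc One_nat_def add_nonneg_pos)
  next
    case False
    then have "complete_hom p q (Suc n) > 0" using 4 that by auto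
    then show ?thesis using "4.prems" n0 by (simp add: add_pos_nonneg)
  qed
  then show ?case using n0 n1 "4.prems" by auto
qed auto

lemma complete_hom_uminus: "complete_hom p (- q) n = (- 1) ^ n * complete_hom p q n"
  by (induction p q n rule: complete_hom.induct) (auto simp: algebra_simps)

lemma complete_hom_zero_eq_0_iff: "p > 0 \<Longrightarrow> complete_hom p 0 n = 0 \<longleftrightarrow> odd n \<or> n = 0"
  by (induction p "0::real" n rule: complete_hom.induct) auto

lemma complete_hom_eq_0_iff:
  assumes "p > 0" "n = 2 \<or> n \<ge> 4"
  shows "complete_hom p q n = 0 \<longleftrightarrow> q = 0 \<and> odd n"
proof (cases q "0::real" rule: linorder_cases)
  case less
  have "complete_hom p (- q) n > 0" using complete_hom_pos[of p "- q" n] assms less by auto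
  then show ?thesis using less complete_hom_uminus[of p "- q" n] by auto
next
  case equal
  then show ?thesis using complete_hom_zero_eq_0_iff[OF assms(1)] assms by auto
next
  case greater
  have "complete_hom p q n > 0" using complete_hom_pos[of p q n] assms greater by auto
  then show ?thesis using greater by auto
qed

text \<open>Keep frame indices such as \<open>sv 1\<close> from being rewritten to \<open>sv (Suc 0)\<close>.\<close>
declare One_nat_def [simp del]

lemma atLeastAtMost_1_3: "{1..3::nat} = {1, 2, 3}"
  by auto

lemma sv_vec2: "sv 1 = vec2 1 0" "sv 2 = vec2 (-1/2) (sqrt 3 / 2)" "sv 3 = vec2 (-1/2) (- sqrt 3 / 2)"
  by (simp_all add: sv_def vec2_def)

lemma inner_sv_sv:
  assumes "k \<in> {1..3}" "l \<in> {1..3}"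
  shows "sv k \<bullet> sv l = (if k = l then 1 else -1/2)"
  using assms unfolding atLeastAtMost_1_3 by (auto simp: sv_vec2 field_simps)

lemma norm_sv: "k \<in> {1..3} \<Longrightarrow> norm (sv k) = 1"
  by (simp add: norm_eq_1 inner_sv_sv)

lemma sv_diff_eq:
  "sv 1 - sv 2 = sqrt 3 *\<^sub>R rot90 (sv 3)"
  "sv 2 - sv 3 = sqrt 3 *\<^sub>R rot90 (sv 1)"
  "sv 3 - sv 1 = sqrt 3 *\<^sub>R rot90 (sv 2)"
  by (simp_all add: sv_vec2 field_simps)

lemma sum_inner_sv: "v \<bullet> sv 1 + v \<bullet> sv 2 + v \<bullet> sv 3 = 0"
proof -
  have "sv 1 + sv 2 + sv 3 = 0" by (simp add: sv_vec2 zero_vec2)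
  then show ?thesis by (metis inner_add_right inner_zero_right)
qed

lemma sqrt_3_inner_rot90_sv:
  "sqrt 3 * (rot90 v \<bullet> sv 1) = v \<bullet> sv 3 - v \<bullet> sv 2"
  "sqrt 3 * (rot90 v \<bullet> sv 2) = v \<bullet> sv 1 - v \<bullet> sv 3"
  "sqrt 3 * (rot90 v \<bullet> sv 3) = v \<bullet> sv 2 - v \<bullet> sv 1"
  by (cases v rule: vec2_cases; simp add: sv_vec2 field_simps)+

definition Tform :: "nat \<Rightarrow> real^2 \<Rightarrow> real" where
  "Tform d v = (\<Sum>k\<in>{1..3}. (v \<bullet> sv k) ^ d)"

lemma Tform_expand: "Tform d v = (v \<bullet> sv 1) ^ d + (v \<bullet> sv 2) ^ d + (v \<bullet> sv 3) ^ d"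
  unfolding Tform_def atLeastAtMost_1_3 by (simp add: add.assoc)

lemma Tform_scaleR: "Tform d (s *\<^sub>R v) = s ^ d * Tform d v"
  by (simp add: Tform_def power_mult_distrib sum_distrib_left)

lemma Tform_vec2: "Tform d (vec2 x y) = x ^ d + ((sqrt 3 * y - x) / 2) ^ d + ((- (sqrt 3 * y) - x) / 2) ^ d"
proof -
  have "vec2 x y \<bullet> sv 1 = x" "vec2 x y \<bullet> sv 2 = (sqrt 3 * y - x) / 2"
    "vec2 x y \<bullet> sv 3 = (- (sqrt 3 * y) - x) / 2"
    by (simp_all add: sv_vec2 field_simps)
  then show ?thesis unfolding Tform_expand by (simp only:)
qed

lemma Tform_2: "Tform 2 v = 3/2 * (norm v)\<^sup>2"
proof -
  obtain x y where v: "v = vec2 x y" by (rule vec2_cases)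
  have "x\<^sup>2 + ((s * y - x) / 2)\<^sup>2 + ((- (s * y) - x) / 2)\<^sup>2 = x\<^sup>2 + (s * s * (y * y) + x * x) / 2" for s :: real
    by (simp add: power2_eq_square field_simps)
  then have "Tform 2 v = x\<^sup>2 + (sqrt 3 * sqrt 3 * (y * y) + x * x) / 2"
    unfolding v Tform_vec2 by (simp only:)
  then show ?thesis unfolding v norm_vec2_power2 by (simp add: power2_eq_square field_simps)
qed

lemma Tform_sv: "k \<in> {1..3} \<Longrightarrow> Tform d (sv k) = 1 + 2 * (- 1 / 2) ^ d"
  by (auto simp: Tform_expand inner_sv_sv atLeastAtMost_1_3)

lemma Tform_uminus: "Tform d (- v) = (- 1) ^ d * Tform d v"
  by (metis Tform_scaleR scaleR_minus1_left)

lemma sum_pairwise_products_inner_sv: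
  "(v \<bullet> sv 1) * (v \<bullet> sv 2) + (v \<bullet> sv 2) * (v \<bullet> sv 3) + (v \<bullet> sv 3) * (v \<bullet> sv 1) = - 3/4 * (norm v)\<^sup>2"
proof -
  have "2 * ((v \<bullet> sv 1) * (v \<bullet> sv 2) + (v \<bullet> sv 2) * (v \<bullet> sv 3) + (v \<bullet> sv 3) * (v \<bullet> sv 1))
      = (v \<bullet> sv 1 + v \<bullet> sv 2 + v \<bullet> sv 3)\<^sup>2 - Tform 2 v"
    unfolding Tform_expand by (simp add: power2_eq_square algebra_simps)
  then show ?thesis by (simp add: sum_inner_sv Tform_2)
qed

lemma power_sum_4_eq:
  fixes a b c :: real
  assumes "a + b + c = 0"
  shows "a ^ 4 + b ^ 4 + c ^ 4 = 2 * (a * b + b * c + c * a)\<^sup>2"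
  using assms by algebra

lemma Tform_4: "Tform 4 v = 9/8 * (norm v) ^ 4"
proof -
  have "Tform 4 v = 2 * (- 3/4 * (norm v)\<^sup>2)\<^sup>2"
    unfolding Tform_expand power_sum_4_eq[OF sum_inner_sv] sum_pairwise_products_inner_sv ..
  also have "\<dots> = 9/8 * (norm v) ^ 4"
    by (simp add: power_mult_distrib power_divide flip: power_mult)
  finally show ?thesis .
qed

lemma inner_Tapply: "v \<bullet> Tapply (Suc n) v = Tform (Suc n) v"
  by (simp add: Tapply_def Tform_def inner_sum_right mult.commute)

lemma sqrt_3_inner_rot90_Tapply:
  "sqrt 3 * (rot90 v \<bullet> Tapply (Suc n) v) =
     (v \<bullet> sv 1) ^ n * (v \<bullet> sv 3 - v \<bullet> sv 2) + (v \<bullet> sv 2) ^ n * (v \<bullet> sv 1 - v \<bullet> sv 3)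
       + (v \<bullet> sv 3) ^ n * (v \<bullet> sv 2 - v \<bullet> sv 1)"
proof -
  have "rot90 v \<bullet> Tapply (Suc n) v = (v \<bullet> sv 1) ^ n * (rot90 v \<bullet> sv 1)
      + (v \<bullet> sv 2) ^ n * (rot90 v \<bullet> sv 2) + (v \<bullet> sv 3) ^ n * (rot90 v \<bullet> sv 3)"
    unfolding Tapply_def atLeastAtMost_1_3 by (simp add: inner_sum_right inner_add_right add.assoc)
  then have "sqrt 3 * (rot90 v \<bullet> Tapply (Suc n) v) = (v \<bullet> sv 1) ^ n * (sqrt 3 * (rot90 v \<bullet> sv 1))
      + (v \<bullet> sv 2) ^ n * (sqrt 3 * (rot90 v \<bullet> sv 2)) + (v \<bullet> sv 3) ^ n * (sqrt 3 * (rot90 v \<bullet> sv 3))"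
    by (simp add: algebra_simps)
  then show ?thesis by (simp only: sqrt_3_inner_rot90_sv)
qed

lemma is_eigenpair_unit_iff:
  assumes "norm v = 1" "d \<ge> 1"
  shows "is_eigenpair d v \<mu> \<longleftrightarrow> \<mu> = Tform d v \<and>
    (v \<bullet> sv 1 - v \<bullet> sv 2) * (v \<bullet> sv 2 - v \<bullet> sv 3) * (v \<bullet> sv 3 - v \<bullet> sv 1)
      * complete_hom (3/4) ((v \<bullet> sv 1) * (v \<bullet> sv 2) * (v \<bullet> sv 3)) (d - 1) = 0"
proof -
  obtain n where d: "d = Suc n" using assms(2) by (cases d) auto
  define a b c where "a = v \<bullet> sv 1" and "b = v \<bullet> sv 2" and "c = v \<bullet> sv 3"
  have e1: "a + b + c = 0" and e2: "- (a * b + b * c + c * a) = 3/4"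
    using sum_inner_sv[of v] sum_pairwise_products_inner_sv[of v] assms(1)
    by (simp_all add: a_def b_def c_def)
  have "a ^ 3 = - (a * b + b * c + c * a) * a + a * b * c"
    "b ^ 3 = - (a * b + b * c + c * a) * b + a * b * c"
    "c ^ 3 = - (a * b + b * c + c * a) * c + a * b * c"
    using e1 by algebra+
  then have roots:
    "a ^ 3 = 3/4 * a + a * b * c" "b ^ 3 = 3/4 * b + a * b * c" "c ^ 3 = 3/4 * c + a * b * c"
    unfolding e2 .
  have "sqrt 3 * (rot90 v \<bullet> Tapply d v) = a ^ n * (c - b) + b ^ n * (a - c) + c ^ n * (b - a)"
    unfolding d a_def b_def c_def by (rule sqrt_3_inner_rot90_Tapply)
  also have "\<dots> = (a - b) * (b - c) * (c - a) * complete_hom (3/4) (a * b * c) n"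
    by (rule alternating_power_sum_eq[OF roots])
  finally have "rot90 v \<bullet> Tapply d v = 0 \<longleftrightarrow>
      (a - b) * (b - c) * (c - a) * complete_hom (3/4) (a * b * c) n = 0"
    by (metis mult_eq_0_iff sqrt_3_neq(1))
  moreover have "v \<bullet> Tapply d v = Tform d v" unfolding d by (rule inner_Tapply)
  moreover have "d - 1 = n" by (simp add: d)
  ultimately show ?thesis
    unfolding is_eigenpair_def eq_scaleR_unit_iff[OF assms(1)] by (simp add: a_def b_def c_def)
qed

lemma is_eigenpair_2_unit: "norm v = 1 \<Longrightarrow> is_eigenpair 2 v (3/2)"
  using is_eigenpair_unit_iff[of v 2 "3/2"] Tform_2[of v] by (simp add: One_nat_def)

lemma is_eigenpair_4_unit: "norm v = 1 \<Longrightarrow> is_eigenpair 4 v (9/8)"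
  using is_eigenpair_unit_iff[of v 4 "9/8"] Tform_4[of v] by (simp add: numeral_3_eq_3)

definition signed_frame :: "(real^2) set" where
  "signed_frame = {s *\<^sub>R sv k | s k. s \<in> {1, -1} \<and> k \<in> {1..3}}"

definition frame_normals :: "(real^2) set" where
  "frame_normals = {(1 / sqrt 3) *\<^sub>R (sv k + 2 *\<^sub>R sv j) | k j. k \<in> {1..3} \<and> j \<in> {1..3} \<and> k \<noteq> j}"

lemma signed_frame_eq: "signed_frame = {sv 1, sv 2, sv 3, - sv 1, - sv 2, - sv 3}"
proof -
  have "signed_frame = {1 *\<^sub>R sv 1, 1 *\<^sub>R sv 2, 1 *\<^sub>R sv 3, (- 1) *\<^sub>R sv 1, (- 1) *\<^sub>R sv 2, (- 1) *\<^sub>R sv 3}"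
    unfolding signed_frame_def atLeastAtMost_1_3 by blast
  then show ?thesis by (simp only: scaleR_one scaleR_minus1_left)
qed

lemma frame_normals_eq:
  "frame_normals = {rot90 (sv 1), - rot90 (sv 1), - rot90 (sv 2), rot90 (sv 2), rot90 (sv 3), - rot90 (sv 3)}"
proof -
  have pairs: "{(k, j). k \<in> {1..3::nat} \<and> j \<in> {1..3} \<and> k \<noteq> j} = {(1, 2), (1, 3), (2, 1), (2, 3), (3, 1), (3, 2)}"
    by auto
  have normals:
    "(1 / sqrt 3) *\<^sub>R (sv 1 + 2 *\<^sub>R sv 2) = rot90 (sv 1)"
    "(1 / sqrt 3) *\<^sub>R (sv 1 + 2 *\<^sub>R sv 3) = - rot90 (sv 1)"
    "(1 / sqrt 3) *\<^sub>R (sv 2 + 2 *\<^sub>R sv 1) = - rot90 (sv 2)"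
    "(1 / sqrt 3) *\<^sub>R (sv 2 + 2 *\<^sub>R sv 3) = rot90 (sv 2)"
    "(1 / sqrt 3) *\<^sub>R (sv 3 + 2 *\<^sub>R sv 1) = rot90 (sv 3)"
    "(1 / sqrt 3) *\<^sub>R (sv 3 + 2 *\<^sub>R sv 2) = - rot90 (sv 3)"
    by (simp_all add: sv_vec2 field_simps)
  have "frame_normals = (\<lambda>(k, j). (1 / sqrt 3) *\<^sub>R (sv k + 2 *\<^sub>R sv j)) ` {(k, j). k \<in> {1..3} \<and> j \<in> {1..3} \<and> k \<noteq> j}"
    unfolding frame_normals_def by auto
  then show ?thesis by (simp only: pairs image_insert image_empty prod.case normals)
qed

lemma diff_prod_eq_0_iff_signed_frame:
  assumes "norm v = 1"
  shows "(v \<bullet> sv 1 - v \<bullet> sv 2) * (v \<bullet> sv 2 - v \<bullet> sv 3) * (v \<bullet> sv 3 - v \<bullet> sv 1) = 0 \<longleftrightarrow> v \<in> signed_frame"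
proof -
  have diffs: "v \<bullet> sv 1 - v \<bullet> sv 2 = sqrt 3 * (v \<bullet> rot90 (sv 3))"
    "v \<bullet> sv 2 - v \<bullet> sv 3 = sqrt 3 * (v \<bullet> rot90 (sv 1))"
    "v \<bullet> sv 3 - v \<bullet> sv 1 = sqrt 3 * (v \<bullet> rot90 (sv 2))"
    by (simp_all only: inner_diff_right[symmetric] sv_diff_eq inner_scaleR_right)
  have "v \<bullet> rot90 (sv k) = 0 \<longleftrightarrow> v = sv k \<or> v = - sv k" if "k \<in> {1..3}" for k
    using unit_inner_rot90_eq_0_iff[OF norm_sv[OF that] assms] .
  then show ?thesis unfolding diffs signed_frame_eq by (auto simp: sqrt_3_neq)
qed

lemma prod_eq_0_iff_frame_normals:
  assumes "norm v = 1"
  shows "(v \<bullet> sv 1) * (v \<bullet> sv 2) * (v \<bullet> sv 3) = 0 \<longleftrightarrow> v \<in> frame_normals"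
proof -
  have "v \<bullet> sv k = 0 \<longleftrightarrow> v = rot90 (sv k) \<or> v = - rot90 (sv k)" if "k \<in> {1..3}" for k
    using unit_inner_eq_0_iff[OF norm_sv[OF that] assms] .
  then show ?thesis unfolding frame_normals_eq by auto
qed

lemma norm_signed_frame: "v \<in> signed_frame \<Longrightarrow> norm v = 1"
  by (auto simp: signed_frame_eq norm_sv)

lemma norm_frame_normals: "v \<in> frame_normals \<Longrightarrow> norm v = 1"
  by (auto simp: frame_normals_eq norm_sv)

lemma is_eigenpair_unit_iff_frame_points:
  assumes "norm v = 1" "d = 3 \<or> d \<ge> 5"
  shows "is_eigenpair d v \<mu> \<longleftrightarrow> \<mu> = Tform d v \<and> (v \<in> signed_frame \<or> v \<in> frame_normals \<and> even d)"
proof -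
  have "odd (d - 1) \<longleftrightarrow> even d" "d - 1 = 2 \<or> d - 1 \<ge> 4" "d \<ge> 1"
    using assms(2) by auto
  then have hom: "complete_hom (3/4) q (d - 1) = 0 \<longleftrightarrow> q = 0 \<and> even d" for q
    using complete_hom_eq_0_iff[of "3/4" "d - 1" q] by simp
  show ?thesis
    unfolding is_eigenpair_unit_iff[OF assms(1) \<open>d \<ge> 1\<close>] mult_eq_0_iff[of _ "complete_hom _ _ _"] hom
      diff_prod_eq_0_iff_signed_frame[OF assms(1)] prod_eq_0_iff_frame_normals[OF assms(1)]
    by auto
qed

lemma power_sum_opposite_eq:
  fixes t :: real
  assumes "t * t = 3/4"
  shows "t ^ d + (- t) ^ d = (sqrt 3 / 2) ^ d + (- (sqrt 3 / 2)) ^ d"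
proof -
  have "t\<^sup>2 = (sqrt 3 / 2)\<^sup>2" using assms by (simp add: power2_eq_square)
  then have "t = sqrt 3 / 2 \<or> t = - (sqrt 3 / 2)" by (simp add: power2_eq_iff)
  then show ?thesis
  proof
    assume "t = - (sqrt 3 / 2)"
    then show ?thesis by (simp only: minus_minus add.commute)
  qed (simp only:)
qed

lemma Tform_frame_normals:
  assumes "v \<in> frame_normals" "d > 0"
  shows "Tform d v = (sqrt 3 / 2) ^ d + (- (sqrt 3 / 2)) ^ d"
proof -
  have unit: "norm v = 1" using assms(1) by (rule norm_frame_normals)
  define a b c where "a = v \<bullet> sv 1" and "b = v \<bullet> sv 2" and "c = v \<bullet> sv 3"
  have e1: "a + b + c = 0" and e2: "a * b + b * c + c * a = - 3/4"
    using sum_inner_sv[of v] sum_pairwise_products_inner_sv[of v] unit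
    by (simp_all add: a_def b_def c_def)
  have "a = 0 \<or> b = 0 \<or> c = 0"
    using prod_eq_0_iff_frame_normals[OF unit] assms(1) by (simp add: a_def b_def c_def)
  moreover have T: "Tform d v = a ^ d + b ^ d + c ^ d"
    unfolding Tform_expand a_def b_def c_def ..
  ultimately show ?thesis
  proof (elim disjE)
    assume "a = 0"
    then have c: "c = - b" using e1 by linarith
    have "b * b = 3/4" using e2 \<open>a = 0\<close> by (simp add: c)
    have "Tform d v = b ^ d + (- b) ^ d" using T assms(2) by (simp add: \<open>a = 0\<close> c)
    then show ?thesis using power_sum_opposite_eq[OF \<open>b * b = 3/4\<close>] by (rule trans)
  next
    assume "b = 0"
    then have c: "c = - a" using e1 by linarith
    have "a * a = 3/4" using e2 \<open>b = 0\<close> by (simp add: c)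
    have "Tform d v = a ^ d + (- a) ^ d" using T assms(2) by (simp add: \<open>b = 0\<close> c)
    then show ?thesis using power_sum_opposite_eq[OF \<open>a * a = 3/4\<close>] by (rule trans)
  next
    assume "c = 0"
    then have b: "b = - a" using e1 by linarith
    have "a * a = 3/4" using e2 \<open>c = 0\<close> by (simp add: b)
    have "Tform d v = a ^ d + (- a) ^ d" using T assms(2) by (simp add: \<open>c = 0\<close> b)
    then show ?thesis using power_sum_opposite_eq[OF \<open>a * a = 3/4\<close>] by (rule trans)
  qed
qed

lemma two_powr_one_minus: "2 powr (1 - real d) = 2 * (1 / 2) ^ d"
  by (simp add: powr_diff powr_realpow power_one_over)

lemma three_powr_half: "3 powr (real d / 2) = sqrt 3 ^ d"
proof -
  have "3 powr (real d / 2) = (3 powr (1/2)) powr real d" by (simp add: powr_powr)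
  also have "\<dots> = sqrt 3 ^ d" by (simp add: powr_half_sqrt powr_realpow)
  finally show ?thesis .
qed

lemma normalized_eigenpairs_eq:
  assumes "d = 3 \<or> d \<ge> 5"
  shows "normalized_eigenpairs d =
    (\<lambda>v. (v, Tform d v)) ` {v. v \<in> signed_frame \<or> v \<in> frame_normals \<and> even d}"
proof -
  have "(v, \<mu>) \<in> normalized_eigenpairs d \<longleftrightarrow>
      (v, \<mu>) \<in> (\<lambda>v. (v, Tform d v)) ` {v. v \<in> signed_frame \<or> v \<in> frame_normals \<and> even d}" for v \<mu>
    using is_eigenpair_unit_iff_frame_points[OF _ assms] norm_signed_frame norm_frame_normals
    by (auto simp: normalized_eigenpairs_def)
  then show ?thesis by (simp add: set_eq_iff)
qed

lemma image_pair_const_Collect: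
  "(\<lambda>v. (v, c)) ` {f s k | s k. P s k} = {(f s k, c) | s k. P s k}"
  by auto

lemma card_image_graph: "card ((\<lambda>v. (v, f v)) ` A) = card A"
  by (rule card_image) (auto intro: inj_onI)

lemma normalized_eigenpairs_even:
  assumes "even d" "d \<ge> 6"
  shows "normalized_eigenpairs d =
      {(s *\<^sub>R sv k, 1 + 2 powr (1 - real d)) | s k. s \<in> {1, -1} \<and> k \<in> {1..3}}
      \<union> {((1 / sqrt 3) *\<^sub>R (sv k + 2 *\<^sub>R sv j), 3 powr (real d / 2) * 2 powr (1 - real d))
          | k j. k \<in> {1..3} \<and> j \<in> {1..3} \<and> k \<noteq> j}" (is "_ = ?pairs")
    and "card (normalized_eigenpairs d) = 12"
proof -
  have frame_val: "Tform d v = 1 + 2 powr (1 - real d)" if "v \<in> signed_frame" for v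
  proof -
    obtain s k where v: "v = s *\<^sub>R sv k" "s \<in> {1, -1}" "k \<in> {1..3}"
      using \<open>v \<in> signed_frame\<close> unfolding signed_frame_def by blast
    then show ?thesis using assms(1) by (auto simp: Tform_scaleR Tform_sv two_powr_one_minus)
  qed
  have normal_val: "Tform d v = 3 powr (real d / 2) * 2 powr (1 - real d)" if "v \<in> frame_normals" for v
    using Tform_frame_normals[OF that] assms
    by (simp add: two_powr_one_minus three_powr_half power_divide)
  have "d = 3 \<or> d \<ge> 5" using assms(2) by auto
  then have eq: "normalized_eigenpairs d = (\<lambda>v. (v, Tform d v)) ` (signed_frame \<union> frame_normals)"
    using normalized_eigenpairs_eq assms(1) by auto
  also have "\<dots> = (\<lambda>v. (v, 1 + 2 powr (1 - real d))) ` signed_frame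
      \<union> (\<lambda>v. (v, 3 powr (real d / 2) * 2 powr (1 - real d))) ` frame_normals"
    unfolding image_Un using frame_val normal_val by (intro arg_cong2[where f = "(\<union>)"] image_cong) auto
  finally show "normalized_eigenpairs d = ?pairs"
    unfolding signed_frame_def frame_normals_def image_pair_const_Collect .
  have "card (signed_frame \<union> frame_normals) = 12"
    by (simp add: signed_frame_eq frame_normals_eq sv_vec2 sqrt_3_neq)
  then show "card (normalized_eigenpairs d) = 12"
    unfolding eq card_image_graph .
qed

lemma normalized_eigenpairs_odd:
  assumes "odd d" "d \<ge> 3"
  shows "normalized_eigenpairs d =
      {(sv k, 1 - 2 powr (1 - real d)) | k. k \<in> {1..3}}
      \<union> {(- sv k, - (1 - 2 powr (1 - real d))) | k. k \<in> {1..3}}"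
    and "card (normalized_eigenpairs d) = 6"
proof -
  have val: "Tform d (sv k) = 1 - 2 powr (1 - real d)" if "k \<in> {1..3}" for k
    using Tform_sv[OF that] assms(1) by (simp add: two_powr_one_minus)
  have "d = 3 \<or> d \<ge> 5" using assms by presburger
  then have eq: "normalized_eigenpairs d = (\<lambda>v. (v, Tform d v)) ` signed_frame"
    using normalized_eigenpairs_eq assms(1) by auto
  have frame: "signed_frame = sv ` {1..3} \<union> (\<lambda>k. - sv k) ` {1..3}"
    unfolding signed_frame_eq atLeastAtMost_1_3 by auto
  have "normalized_eigenpairs d = (\<lambda>k. (sv k, 1 - 2 powr (1 - real d))) ` {1..3}
      \<union> (\<lambda>k. (- sv k, - (1 - 2 powr (1 - real d)))) ` {1..3}"
    unfolding eq frame image_Un image_image using val assms(1)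
    by (intro arg_cong2[where f = "(\<union>)"] image_cong) (auto simp: Tform_uminus)
  then show "normalized_eigenpairs d = {(sv k, 1 - 2 powr (1 - real d)) | k. k \<in> {1..3}}
      \<union> {(- sv k, - (1 - 2 powr (1 - real d))) | k. k \<in> {1..3}}"
    by (simp only: setcompr_eq_image Collect_mem_eq)
  have "card signed_frame = 6"
    by (simp add: signed_frame_eq sv_vec2 sqrt_3_neq)
  then show "card (normalized_eigenpairs d) = 6"
    unfolding eq card_image_graph .
qed

theorem mainTheorem8:
  shows "(\<forall>v :: real^2. norm v = 1 \<longrightarrow> is_eigenpair 2 v (3/2))
       \<and> (\<forall>v :: real^2. norm v = 1 \<longrightarrow> is_eigenpair 4 v (9/8))
       \<and> (\<forall>d::nat. even d \<and> d \<ge> 6 \<longrightarrow>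
            normalized_eigenpairs d =
              {(s *\<^sub>R sv k, 1 + 2 powr (1 - real d)) | s k. s \<in> {1, -1} \<and> k \<in> {1..3}}
              \<union> {((1 / sqrt 3) *\<^sub>R (sv k + 2 *\<^sub>R sv j), 3 powr (real d / 2) * 2 powr (1 - real d))
                  | k j. k \<in> {1..3} \<and> j \<in> {1..3} \<and> k \<noteq> j}
            \<and> card (normalized_eigenpairs d) = 12)
       \<and> (\<forall>d::nat. odd d \<and> d \<ge> 3 \<longrightarrow>
            normalized_eigenpairs d =
              {(sv k, 1 - 2 powr (1 - real d)) | k. k \<in> {1..3}}
              \<union> {(- sv k, - (1 - 2 powr (1 - real d))) | k. k \<in> {1..3}}
            \<and> card (normalized_eigenpairs d) = 6)"
  by (intro conjI allI impI; (elim conjE)?;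
      (rule is_eigenpair_2_unit is_eigenpair_4_unit normalized_eigenpairs_even normalized_eigenpairs_odd; assumption))

end
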